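(* Let $(\mathsf{C},\otimes,I)$ be an additive symmetric monoidal category and $A$ an object. For all $n\ge1$ and $0\le k\le n-1$, $\mathsf{unsh}(n+1,k+1)_A=\mathsf{unsh}(n,k+1)_A\otimes 1_A+\mathsf{unsh}(n,k)_A\otimes 1_A;1_{A^{\otimes k}}\otimes\gamma_{A^{\otimes(n-k)},A}$ as morphisms $A^{\otimes(n+1)}\to A^{\otimes(n+1)}$.
   Context: Composition is written $f;g$ (first $f$ then $g$); the monoidal structure is treated as strict, $\gamma$ is the symmetry. An additive symmetric monoidal category is a symmetric monoidal category whose hom-sets are commutative monoids with composition and $\otimes$ preserving $0$ and $+$ in each argument. For $\sigma\in S_n$, $\overline{\sigma}_{A,\dots,A}\colon A^{\otimes n}\to A^{\otimes n}$ is the canonical symmetry isomorphism moving the $i$-th factor to position $\sigma(i)$ (identity for $n\le1$). A $(k,l)$-unshuffle is a permutation $\sigma\in S_{k+l}$ with $\sigma^{-1}(1)<\dots<\sigma^{-1}(k)$ and $\sigma^{-1}(k+1)<\dots<\sigma^{-1}(k+l)$; $\mathsf{Unsh}(n,k)$ is the set of $(k,n-k)$-unshuffles and $\mathsf{unsh}(n,k)_A:=\sum_{\sigma\in\mathsf{Unsh}(n,k)}\overline{\sigma}_{A,\dots,A}$. *)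

theory Defs
  imports "HOL-Combinatorics.Permutations"
begin

text \<open>
  Objects are the elements of type 'o; morphisms live in type 'm, and
  hom a b is the set of morphisms a -> b.
  comp f g is diagrammatic composition f;g (first f then g).
  tensO / tensM are the tensor on objects / morphisms, unit is I,
  sym a b is the symmetry a (x) b -> b (x) a.
  Each hom-set is a commutative monoid under the restriction of the
  ambient addition of 'm (0 lies in every hom-set).
\<close>

locale add_sym_mon_cat =
  fixes hom :: "'o \<Rightarrow> 'o \<Rightarrow> 'm::comm_monoid_add set"
    and comp :: "'m \<Rightarrow> 'm \<Rightarrow> 'm"
    and idm :: "'o \<Rightarrow> 'm"
    and tensO :: "'o \<Rightarrow> 'o \<Rightarrow> 'o"
    and tensM :: "'m \<Rightarrow> 'm \<Rightarrow> 'm"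
    and unit :: "'o"
    and sym :: "'o \<Rightarrow> 'o \<Rightarrow> 'm"
  assumes id_hom: "idm a \<in> hom a a"
    and comp_hom: "f \<in> hom a b \<Longrightarrow> g \<in> hom b c \<Longrightarrow> comp f g \<in> hom a c"
    and comp_assoc: "f \<in> hom a b \<Longrightarrow> g \<in> hom b c \<Longrightarrow> h \<in> hom c d \<Longrightarrow>
                       comp (comp f g) h = comp f (comp g h)"
    and id_left: "f \<in> hom a b \<Longrightarrow> comp (idm a) f = f"
    and id_right: "f \<in> hom a b \<Longrightarrow> comp f (idm b) = f"
    and tensO_assoc: "tensO (tensO a b) c = tensO a (tensO b c)"
    and tensO_unit_left: "tensO unit a = a"
    and tensO_unit_right: "tensO a unit = a"
    and tensM_hom: "f \<in> hom a b \<Longrightarrow> g \<in> hom c d \<Longrightarrow> tensM f g \<in> hom (tensO a c) (tensO b d)"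
    and tensM_id: "tensM (idm a) (idm b) = idm (tensO a b)"
    and tensM_comp: "f \<in> hom a b \<Longrightarrow> g \<in> hom b c \<Longrightarrow> h \<in> hom d e \<Longrightarrow> k \<in> hom e e' \<Longrightarrow>
                       tensM (comp f g) (comp h k) = comp (tensM f h) (tensM g k)"
    and tensM_assoc: "f \<in> hom a b \<Longrightarrow> g \<in> hom c d \<Longrightarrow> h \<in> hom e e' \<Longrightarrow>
                       tensM (tensM f g) h = tensM f (tensM g h)"
    and tensM_unit_left: "f \<in> hom a b \<Longrightarrow> tensM (idm unit) f = f"
    and tensM_unit_right: "f \<in> hom a b \<Longrightarrow> tensM f (idm unit) = f"
    and sym_hom: "sym a b \<in> hom (tensO a b) (tensO b a)"
    and sym_natural: "f \<in> hom a b \<Longrightarrow> g \<in> hom c d \<Longrightarrow>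
                       comp (tensM f g) (sym b d) = comp (sym a c) (tensM g f)"
    and sym_inv: "comp (sym a b) (sym b a) = idm (tensO a b)"
    and sym_hexagon: "sym a (tensO b c) = comp (tensM (sym a b) (idm c)) (tensM (idm b) (sym a c))"
    and sym_unit: "sym unit a = idm a"
    and zero_hom: "0 \<in> hom a b"
    and plus_hom: "f \<in> hom a b \<Longrightarrow> g \<in> hom a b \<Longrightarrow> f + g \<in> hom a b"
    and comp_plus_left: "f \<in> hom a b \<Longrightarrow> g \<in> hom a b \<Longrightarrow> h \<in> hom b c \<Longrightarrow>
                       comp (f + g) h = comp f h + comp g h"
    and comp_plus_right: "f \<in> hom a b \<Longrightarrow> g \<in> hom b c \<Longrightarrow> h \<in> hom b c \<Longrightarrow>
                       comp f (g + h) = comp f g + comp f h"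
    and comp_zero_left: "h \<in> hom b c \<Longrightarrow> comp 0 h = 0"
    and comp_zero_right: "f \<in> hom a b \<Longrightarrow> comp f 0 = 0"
    and tensM_plus_left: "f \<in> hom a b \<Longrightarrow> g \<in> hom a b \<Longrightarrow> h \<in> hom c d \<Longrightarrow>
                       tensM (f + g) h = tensM f h + tensM g h"
    and tensM_plus_right: "f \<in> hom a b \<Longrightarrow> g \<in> hom c d \<Longrightarrow> h \<in> hom c d \<Longrightarrow>
                       tensM f (g + h) = tensM f g + tensM f h"
    and tensM_zero_left: "h \<in> hom c d \<Longrightarrow> tensM 0 h = 0"
    and tensM_zero_right: "f \<in> hom a b \<Longrightarrow> tensM f 0 = 0"

primrec opow :: "('o \<Rightarrow> 'o \<Rightarrow> 'o) \<Rightarrow> 'o \<Rightarrow> 'o \<Rightarrow> nat \<Rightarrow> 'o" where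
  "opow tensO unit A 0 = unit"
| "opow tensO unit A (Suc n) = tensO (opow tensO unit A n) A"

text \<open>
  Canonical symmetry isomorphism for a permutation sigma of {1..n}, moving the
  i-th factor to position sigma i.
\<close>
fun psym :: "('m \<Rightarrow> 'm \<Rightarrow> 'm) \<Rightarrow> ('o \<Rightarrow> 'm) \<Rightarrow> ('o \<Rightarrow> 'o \<Rightarrow> 'o) \<Rightarrow> ('m \<Rightarrow> 'm \<Rightarrow> 'm)
              \<Rightarrow> 'o \<Rightarrow> ('o \<Rightarrow> 'o \<Rightarrow> 'm) \<Rightarrow> 'o \<Rightarrow> nat \<Rightarrow> (nat \<Rightarrow> nat) \<Rightarrow> 'm" where
  "psym cmp idm tensO tensM unit symm A 0 \<sigma> = idm unit"
| "psym cmp idm tensO tensM unit symm A (Suc n) \<sigma> =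
     (let j = \<sigma> (Suc n);
          \<sigma>' = (\<lambda>i. if 1 \<le> i \<and> i \<le> n then (if \<sigma> i < j then \<sigma> i else \<sigma> i - 1) else i)
      in cmp (tensM (psym cmp idm tensO tensM unit symm A n \<sigma>') (idm A))
              (tensM (idm (opow tensO unit A (j - 1)))
                     (symm (opow tensO unit A (Suc n - j)) A)))"

definition Unsh :: "nat \<Rightarrow> nat \<Rightarrow> (nat \<Rightarrow> nat) set" where
  "Unsh n k = {\<sigma>. \<sigma> permutes {1..n}
      \<and> (\<forall>i j. 1 \<le> i \<and> i < j \<and> j \<le> k \<longrightarrow> inv \<sigma> i < inv \<sigma> j)
      \<and> (\<forall>i j. k < i \<and> i < j \<and> j \<le> n \<longrightarrow> inv \<sigma> i < inv \<sigma> j)}"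

definition unsh :: "('m::comm_monoid_add \<Rightarrow> 'm \<Rightarrow> 'm) \<Rightarrow> ('o \<Rightarrow> 'm) \<Rightarrow> ('o \<Rightarrow> 'o \<Rightarrow> 'o) \<Rightarrow> ('m \<Rightarrow> 'm \<Rightarrow> 'm)
              \<Rightarrow> 'o \<Rightarrow> ('o \<Rightarrow> 'o \<Rightarrow> 'm) \<Rightarrow> 'o \<Rightarrow> nat \<Rightarrow> nat \<Rightarrow> 'm" where
  "unsh cmp idm tensO tensM unit symm A n k =
     (\<Sum>\<sigma>\<in>Unsh n k. psym cmp idm tensO tensM unit symm A n \<sigma>)"

end

theory Submission
  imports Defs
begin

text \<open>
  An unshuffle in Unsh(n+1, k+1) sends the last factor to the greatest position of its block,
  i.e. to n+1 or to k+1: its successor position would otherwise have to be occupied by a factor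
  after the last one.  Deleting the last factor, which is exactly the recursion step in the
  definition of the canonical symmetry, is a bijection from the unshuffles of the first kind onto
  Unsh(n, k+1) and from those of the second kind onto Unsh(n, k), with summands sigma' (x) 1 and
  (sigma' (x) 1);(1 (x) gamma) respectively.  Since composition and tensor are additive in each
  argument, the identity follows by splitting the sum accordingly.
\<close>

lemma strict_mono_on_insert_greatest:
  fixes f :: "'a::order \<Rightarrow> 'b::order"
  assumes "\<And>x. x \<in> X \<Longrightarrow> x < m \<and> f x < f m"
  shows "strict_mono_on (insert m X) f \<longleftrightarrow> strict_mono_on X f"
  using assms by (auto simp: strict_mono_on_def dest: order.asym)

lemma strict_mono_on_cong:
  "(\<And>x. x \<in> A \<Longrightarrow> f x = g x) \<Longrightarrow> strict_mono_on A f \<longleftrightarrow> strict_mono_on A g"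
  by (simp add: strict_mono_on_def)

lemma strict_mono_on_image_iff:
  fixes g :: "'a::linorder \<Rightarrow> 'b::linorder"
  assumes "strict_mono_on X g"
  shows "strict_mono_on (g ` X) f \<longleftrightarrow> strict_mono_on X (f \<circ> g)"
  using strict_mono_on_less[OF assms] by (auto simp: strict_mono_on_def)

lemma Unsh_eq:
  "Unsh n k = {\<sigma>. \<sigma> permutes {1..n} \<and> strict_mono_on {1..k} (inv \<sigma>) \<and> strict_mono_on {k<..n} (inv \<sigma>)}"
  unfolding Unsh_def strict_mono_on_def by auto

text \<open>The induced permutation sigma' in the recursive clause of psym.\<close>

definition perm_remove_last :: "nat \<Rightarrow> (nat \<Rightarrow> nat) \<Rightarrow> nat \<Rightarrow> nat" where
  "perm_remove_last n \<sigma> =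
     (\<lambda>i. if 1 \<le> i \<and> i \<le> n then (if \<sigma> i < \<sigma> (Suc n) then \<sigma> i else \<sigma> i - 1) else i)"

definition perm_insert_last :: "nat \<Rightarrow> nat \<Rightarrow> (nat \<Rightarrow> nat) \<Rightarrow> nat \<Rightarrow> nat" where
  "perm_insert_last n j \<tau> =
     (\<lambda>i. if i = Suc n then j else if 1 \<le> i \<and> i \<le> n then (if \<tau> i < j then \<tau> i else Suc (\<tau> i)) else i)"

lemma permutes_Suc_before_last:
  assumes "\<sigma> permutes {1..Suc n}" "i \<in> {1..n}"
  shows "\<sigma> i \<noteq> \<sigma> (Suc n)" "\<sigma> i \<in> {1..Suc n}"
  using assms permutes_inj[OF assms(1)] permutes_in_image[OF assms(1)] by (auto dest: injD)

lemma perm_remove_last_permutes: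
  assumes \<sigma>: "\<sigma> permutes {1..Suc n}"
  shows "perm_remove_last n \<sigma> permutes {1..n}"
proof (rule inj_imp_permutes)
  show "inj_on (perm_remove_last n \<sigma>) {1..n}"
  proof (rule inj_onI)
    fix i i' assume i: "i \<in> {1..n}" and i': "i' \<in> {1..n}"
      and "perm_remove_last n \<sigma> i = perm_remove_last n \<sigma> i'"
    then have "\<sigma> i = \<sigma> i'"
      using permutes_Suc_before_last[OF \<sigma> i] permutes_Suc_before_last[OF \<sigma> i']
      by (auto simp: perm_remove_last_def split: if_splits)
    then show "i = i'" using permutes_inj[OF \<sigma>] by (auto dest: injD)
  qed
  show "perm_remove_last n \<sigma> i \<in> {1..n}" if "i \<in> {1..n}" for i
    using that permutes_Suc_before_last[OF \<sigma> that] permutes_in_image[OF \<sigma>, of "Suc n"]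
    by (auto simp: perm_remove_last_def)
qed (auto simp: perm_remove_last_def)

lemma perm_insert_last_permutes:
  assumes \<tau>: "\<tau> permutes {1..n}" and j: "j \<in> {1..Suc n}"
  shows "perm_insert_last n j \<tau> permutes {1..Suc n}"
proof (rule inj_imp_permutes)
  have last: "perm_insert_last n j \<tau> (Suc n) = j" by (simp add: perm_insert_last_def)
  have below_last: "perm_insert_last n j \<tau> i \<in> {1..Suc n} - {j}" if "i \<in> {1..n}" for i
    using that permutes_in_image[OF \<tau>, of i] by (auto simp: perm_insert_last_def)
  show "inj_on (perm_insert_last n j \<tau>) {1..Suc n}"
  proof (rule inj_onI)
    fix i i' assume i: "i \<in> {1..Suc n}" and i': "i' \<in> {1..Suc n}"
      and eq: "perm_insert_last n j \<tau> i = perm_insert_last n j \<tau> i'"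
    show "i = i'"
    proof (cases "i = Suc n \<or> i' = Suc n")
      case True
      then show ?thesis
        using eq i i' below_last[of i] below_last[of i'] last by (auto simp: le_Suc_eq)
    next
      case False
      then have "i \<in> {1..n}" "i' \<in> {1..n}" using i i' by auto
      then have "\<tau> i = \<tau> i'"
        using eq by (simp add: perm_insert_last_def split: if_splits)
      then show ?thesis using permutes_inj[OF \<tau>] by (auto dest: injD)
    qed
  qed
  show "perm_insert_last n j \<tau> i \<in> {1..Suc n}" if "i \<in> {1..Suc n}" for i
    using that j below_last[of i] last by (cases "i = Suc n") auto
qed (auto simp: perm_insert_last_def)

lemma perm_remove_insert_last:
  assumes "\<tau> permutes {1..n}"
  shows "perm_remove_last n (perm_insert_last n j \<tau>) = \<tau>"
  using permutes_not_in[OF assms]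
  by (auto simp: fun_eq_iff perm_remove_last_def perm_insert_last_def)

lemma perm_insert_remove_last:
  assumes \<sigma>: "\<sigma> permutes {1..Suc n}"
  shows "perm_insert_last n (\<sigma> (Suc n)) (perm_remove_last n \<sigma>) = \<sigma>"
  using permutes_Suc_before_last[OF \<sigma>] permutes_not_in[OF \<sigma>]
  by (fastforce simp: fun_eq_iff perm_remove_last_def perm_insert_last_def)

lemma bij_betw_perm_remove_last:
  assumes "j \<in> {1..Suc n}"
  shows "bij_betw (perm_remove_last n) {\<sigma>. \<sigma> permutes {1..Suc n} \<and> \<sigma> (Suc n) = j}
           {\<tau>. \<tau> permutes {1..n}}"
proof (rule bij_betw_byWitness[where f' = "perm_insert_last n j"])
  show "perm_insert_last n j ` {\<tau>. \<tau> permutes {1..n}}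
          \<subseteq> {\<sigma>. \<sigma> permutes {1..Suc n} \<and> \<sigma> (Suc n) = j}"
    using perm_insert_last_permutes[OF _ assms] by (auto simp: perm_insert_last_def)
  show "perm_remove_last n ` {\<sigma>. \<sigma> permutes {1..Suc n} \<and> \<sigma> (Suc n) = j}
          \<subseteq> {\<tau>. \<tau> permutes {1..n}}"
    using perm_remove_last_permutes by blast
qed (auto simp: perm_remove_insert_last perm_insert_remove_last)

lemma inv_perm_remove_last:
  assumes \<sigma>: "\<sigma> permutes {1..Suc n}" and y: "y \<in> {1..n}"
  shows "inv (perm_remove_last n \<sigma>) y = inv \<sigma> (if y < \<sigma> (Suc n) then y else Suc y)"
proof (rule permutes_inv_eq[OF perm_remove_last_permutes[OF \<sigma>], THEN iffD2])
  define z where "z = (if y < \<sigma> (Suc n) then y else Suc y)"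
  have z: "z \<in> {1..Suc n}" "z \<noteq> \<sigma> (Suc n)"
    using y by (simp_all add: z_def)
  have \<sigma>_inv: "\<sigma> (inv \<sigma> z) = z" by (rule permutes_inverses(1)[OF \<sigma>])
  have "inv \<sigma> z \<in> {1..Suc n}"
    using z(1) by (rule permutes_in_image[OF permutes_inv[OF \<sigma>], THEN iffD2])
  moreover have "inv \<sigma> z \<noteq> Suc n" using \<sigma>_inv z(2) by metis
  ultimately have "inv \<sigma> z \<in> {1..n}" by auto
  then have "perm_remove_last n \<sigma> (inv \<sigma> z) = (if z < \<sigma> (Suc n) then z else z - 1)"
    unfolding perm_remove_last_def \<sigma>_inv by simp
  also have "\<dots> = y" by (simp add: z_def)
  finally show "perm_remove_last n \<sigma> (inv \<sigma> (if y < \<sigma> (Suc n) then y else Suc y)) = y"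
    unfolding z_def .
qed

lemma inv_permutes_less_last:
  assumes \<sigma>: "\<sigma> permutes {1..Suc n}" and "y \<in> {1..Suc n}" "y \<noteq> \<sigma> (Suc n)"
  shows "inv \<sigma> y < Suc n"
proof -
  have "inv \<sigma> y \<in> {1..Suc n}"
    using assms(2) by (rule permutes_in_image[OF permutes_inv[OF \<sigma>], THEN iffD2])
  moreover have "inv \<sigma> y \<noteq> Suc n" using assms(3) permutes_inverses(1)[OF \<sigma>] by metis
  ultimately show ?thesis by simp
qed

lemma Unsh_last_cases:
  assumes \<sigma>: "\<sigma> \<in> Unsh (Suc n) (Suc k)" and "k \<le> n"
  shows "\<sigma> (Suc n) = Suc k \<or> \<sigma> (Suc n) = Suc n"
proof (rule ccontr)
  define j where "j = \<sigma> (Suc n)"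
  assume "\<not> ?thesis"
  then have "j \<noteq> Suc k" "j \<noteq> Suc n" unfolding j_def by auto
  have perm: "\<sigma> permutes {1..Suc n}" and mono_low: "strict_mono_on {1..Suc k} (inv \<sigma>)"
    and mono_high: "strict_mono_on {Suc k<..Suc n} (inv \<sigma>)"
    using \<sigma> by (auto simp: Unsh_eq)
  have "j \<in> {1..Suc n}" unfolding j_def by (rule permutes_in_image[OF perm, THEN iffD2]) simp
  have "inv \<sigma> j = Suc n" unfolding j_def by (rule permutes_inverses(2)[OF perm])
  moreover have "inv \<sigma> j < inv \<sigma> (Suc j)"
  proof (cases "j \<le> Suc k")
    case True
    then show ?thesis
      using \<open>j \<in> {1..Suc n}\<close> \<open>j \<noteq> Suc k\<close> by (intro strict_mono_onD[OF mono_low]) auto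
  next
    case False
    then show ?thesis
      using \<open>j \<in> {1..Suc n}\<close> \<open>j \<noteq> Suc n\<close> by (intro strict_mono_onD[OF mono_high]) auto
  qed
  moreover have "inv \<sigma> (Suc j) < Suc n"
    using \<open>j \<in> {1..Suc n}\<close> \<open>j \<noteq> Suc n\<close> by (intro inv_permutes_less_last[OF perm]) (auto simp: j_def)
  ultimately show False by simp
qed

lemma Unsh_Suc_iff_perm_remove_last_fixed:
  assumes \<sigma>: "\<sigma> permutes {1..Suc n}" and last: "\<sigma> (Suc n) = Suc n" and "k \<le> n"
  shows "\<sigma> \<in> Unsh (Suc n) k \<longleftrightarrow> perm_remove_last n \<sigma> \<in> Unsh n k"
proof -
  have inv_eq: "inv (perm_remove_last n \<sigma>) y = inv \<sigma> y" if "y \<in> {1..n}" for y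
    using inv_perm_remove_last[OF \<sigma> that] that last by simp
  have "strict_mono_on {1..k} (inv \<sigma>) \<longleftrightarrow> strict_mono_on {1..k} (inv (perm_remove_last n \<sigma>))"
    using \<open>k \<le> n\<close> by (intro strict_mono_on_cong) (simp add: inv_eq)
  moreover have "strict_mono_on {k<..Suc n} (inv \<sigma>) \<longleftrightarrow> strict_mono_on {k<..n} (inv \<sigma>)"
  proof -
    have "{k<..Suc n} = insert (Suc n) {k<..n}" using \<open>k \<le> n\<close> by auto
    moreover have "x < Suc n \<and> inv \<sigma> x < inv \<sigma> (Suc n)" if "x \<in> {k<..n}" for x
      using that inv_permutes_less_last[OF \<sigma>, of x] last permutes_inverses(2)[OF \<sigma>, of "Suc n"]
      by auto
    ultimately show ?thesis by (metis strict_mono_on_insert_greatest)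
  qed
  moreover have "\<dots> \<longleftrightarrow> strict_mono_on {k<..n} (inv (perm_remove_last n \<sigma>))"
    by (intro strict_mono_on_cong) (simp add: inv_eq)
  ultimately show ?thesis
    using \<sigma> perm_remove_last_permutes[OF \<sigma>] by (simp add: Unsh_eq)
qed

lemma Unsh_Suc_Suc_iff_perm_remove_last:
  assumes \<sigma>: "\<sigma> permutes {1..Suc n}" and last: "\<sigma> (Suc n) = Suc k" and "k \<le> n"
  shows "\<sigma> \<in> Unsh (Suc n) (Suc k) \<longleftrightarrow> perm_remove_last n \<sigma> \<in> Unsh n k"
proof -
  have inv_eq: "inv (perm_remove_last n \<sigma>) y = inv \<sigma> (if y \<le> k then y else Suc y)"
    if "y \<in> {1..n}" for y
    using inv_perm_remove_last[OF \<sigma> that] last by simp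
  have "strict_mono_on {1..Suc k} (inv \<sigma>) \<longleftrightarrow> strict_mono_on {1..k} (inv \<sigma>)"
  proof -
    have "{1..Suc k} = insert (Suc k) {1..k}" by auto
    moreover have "x < Suc k \<and> inv \<sigma> x < inv \<sigma> (Suc k)" if "x \<in> {1..k}" for x
      using that \<open>k \<le> n\<close> inv_permutes_less_last[OF \<sigma>, of x] last
        permutes_inverses(2)[OF \<sigma>, of "Suc n"]
      by auto
    ultimately show ?thesis by (metis strict_mono_on_insert_greatest)
  qed
  moreover have "\<dots> \<longleftrightarrow> strict_mono_on {1..k} (inv (perm_remove_last n \<sigma>))"
    using \<open>k \<le> n\<close> by (intro strict_mono_on_cong) (simp add: inv_eq)
  moreover have "strict_mono_on {Suc k<..Suc n} (inv \<sigma>)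
      \<longleftrightarrow> strict_mono_on {k<..n} (inv (perm_remove_last n \<sigma>))"
  proof -
    have "{Suc k<..Suc n} = Suc ` {k<..n}"
      by (simp flip: atLeastSucAtMost_greaterThanAtMost)
    then have "strict_mono_on {Suc k<..Suc n} (inv \<sigma>) \<longleftrightarrow> strict_mono_on {k<..n} (inv \<sigma> \<circ> Suc)"
      by (simp add: strict_mono_on_image_iff strict_mono_onI)
    also have "\<dots> \<longleftrightarrow> strict_mono_on {k<..n} (inv (perm_remove_last n \<sigma>))"
      by (intro strict_mono_on_cong) (simp add: inv_eq)
    finally show ?thesis .
  qed
  ultimately show ?thesis
    using \<sigma> perm_remove_last_permutes[OF \<sigma>] by (simp add: Unsh_eq)
qed

lemma Unsh_permutes: "\<sigma> \<in> Unsh n k \<Longrightarrow> \<sigma> permutes {1..n}"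
  by (simp add: Unsh_def)

lemma finite_Unsh: "finite (Unsh n k)"
  by (rule finite_subset[OF _ finite_permutations[of "{1..n}"]]) (auto simp: Unsh_def)

lemma bij_betw_Unsh_perm_remove_last:
  assumes "j \<in> {1..Suc n}"
    and "\<And>\<sigma>. \<sigma> permutes {1..Suc n} \<Longrightarrow> \<sigma> (Suc n) = j \<Longrightarrow>
           \<sigma> \<in> Unsh (Suc n) k \<longleftrightarrow> perm_remove_last n \<sigma> \<in> Unsh n k'"
  shows "bij_betw (perm_remove_last n) {\<sigma> \<in> Unsh (Suc n) k. \<sigma> (Suc n) = j} (Unsh n k')"
proof -
  have "bij_betw (perm_remove_last n)
          {\<sigma> \<in> {\<sigma>. \<sigma> permutes {1..Suc n} \<and> \<sigma> (Suc n) = j}. \<sigma> \<in> Unsh (Suc n) k}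
          {\<tau> \<in> {\<tau>. \<tau> permutes {1..n}}. \<tau> \<in> Unsh n k'}"
    by (rule bij_betw_Collect[OF bij_betw_perm_remove_last[OF assms(1)]]) (use assms(2) in auto)
  moreover have "{\<sigma> \<in> {\<sigma>. \<sigma> permutes {1..Suc n} \<and> \<sigma> (Suc n) = j}. \<sigma> \<in> Unsh (Suc n) k}
      = {\<sigma> \<in> Unsh (Suc n) k. \<sigma> (Suc n) = j}"
    and "{\<tau> \<in> {\<tau>. \<tau> permutes {1..n}}. \<tau> \<in> Unsh n k'} = Unsh n k'"
    by (auto simp: Unsh_def)
  ultimately show ?thesis by simp
qed

lemma psym_Suc:
  "psym cmp idm tensO tensM unit symm A (Suc n) \<sigma> =
     cmp (tensM (psym cmp idm tensO tensM unit symm A n (perm_remove_last n \<sigma>)) (idm A))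
         (tensM (idm (opow tensO unit A (\<sigma> (Suc n) - 1)))
                (symm (opow tensO unit A (Suc n - \<sigma> (Suc n))) A))"
  by (simp add: Let_def perm_remove_last_def)

context add_sym_mon_cat
begin

abbreviation tpow :: "'o \<Rightarrow> nat \<Rightarrow> 'o" where
  "tpow A n \<equiv> opow tensO unit A n"

abbreviation perm_sym :: "'o \<Rightarrow> nat \<Rightarrow> (nat \<Rightarrow> nat) \<Rightarrow> 'm" where
  "perm_sym A n \<sigma> \<equiv> psym comp idm tensO tensM unit sym A n \<sigma>"

abbreviation unsh_sum :: "'o \<Rightarrow> nat \<Rightarrow> nat \<Rightarrow> 'm" where
  "unsh_sum A n k \<equiv> unsh comp idm tensO tensM unit sym A n k"

lemma tpow_add: "tensO (tpow A a) (tpow A b) = tpow A (a + b)"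
  by (induction b) (simp_all add: tensO_unit_right flip: tensO_assoc)

lemma tpow_Suc_left: "tensO A (tpow A n) = tpow A (Suc n)"
  using tpow_add[of A 1 n] by (simp add: tensO_unit_left)

lemma idm_tensM_sym_hom:
  "tensM (idm (tpow A a)) (sym (tpow A b) A) \<in> hom (tpow A (a + Suc b)) (tpow A (a + Suc b))"
proof -
  have "tensM (idm (tpow A a)) (sym (tpow A b) A)
      \<in> hom (tensO (tpow A a) (tensO (tpow A b) A)) (tensO (tpow A a) (tensO A (tpow A b)))"
    by (rule tensM_hom[OF id_hom sym_hom])
  moreover have "tensO (tpow A a) (tensO (tpow A b) A) = tpow A (a + Suc b)"
    by (simp only: opow.simps(2)[symmetric] tpow_add)
  moreover have "tensO (tpow A a) (tensO A (tpow A b)) = tpow A (a + Suc b)"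
    by (simp only: tpow_Suc_left tpow_add)
  ultimately show ?thesis by simp
qed

lemma psym_hom: "\<sigma> permutes {1..n} \<Longrightarrow> perm_sym A n \<sigma> \<in> hom (tpow A n) (tpow A n)"
proof (induction n arbitrary: \<sigma>)
  case 0
  then show ?case by (simp add: id_hom)
next
  case (Suc n)
  have "\<sigma> (Suc n) \<in> {1..Suc n}"
    by (rule permutes_in_image[OF Suc.prems, THEN iffD2]) simp
  then have "tpow A (\<sigma> (Suc n) - 1 + Suc (Suc n - \<sigma> (Suc n))) = tpow A (Suc n)"
    by (simp add: Suc_diff_le)
  then have "tensM (idm (tpow A (\<sigma> (Suc n) - 1))) (sym (tpow A (Suc n - \<sigma> (Suc n))) A)
      \<in> hom (tpow A (Suc n)) (tpow A (Suc n))"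
    using idm_tensM_sym_hom by metis
  moreover have "tensM (perm_sym A n (perm_remove_last n \<sigma>)) (idm A) \<in> hom (tpow A (Suc n)) (tpow A (Suc n))"
    using tensM_hom[OF Suc.IH[OF perm_remove_last_permutes[OF Suc.prems]] id_hom] by simp
  ultimately show ?case unfolding psym_Suc by (rule comp_hom[rotated])
qed

lemma sum_hom: "(\<And>x. x \<in> S \<Longrightarrow> f x \<in> hom a b) \<Longrightarrow> sum f S \<in> hom a b"
  by (induction S rule: infinite_finite_induct) (auto simp: zero_hom plus_hom)

lemma tensM_sum_left:
  assumes "\<And>x. x \<in> S \<Longrightarrow> f x \<in> hom a b" and "h \<in> hom c d"
  shows "tensM (sum f S) h = (\<Sum>x\<in>S. tensM (f x) h)"
  using assms(1)
proof (induction S rule: infinite_finite_induct)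
  case (insert x S)
  have "f x \<in> hom a b" "sum f S \<in> hom a b" using insert.prems by (auto intro: sum_hom)
  then have "tensM (f x + sum f S) h = tensM (f x) h + tensM (sum f S) h"
    using assms(2) by (rule tensM_plus_left)
  then show ?case using insert by simp
qed (simp_all add: tensM_zero_left[OF assms(2)])

lemma comp_sum_left:
  assumes "\<And>x. x \<in> S \<Longrightarrow> f x \<in> hom a b" and "h \<in> hom b c"
  shows "comp (sum f S) h = (\<Sum>x\<in>S. comp (f x) h)"
  using assms(1)
proof (induction S rule: infinite_finite_induct)
  case (insert x S)
  have "f x \<in> hom a b" "sum f S \<in> hom a b" using insert.prems by (auto intro: sum_hom)
  then have "comp (f x + sum f S) h = comp (f x) h + comp (sum f S) h"
    using assms(2) by (rule comp_plus_left)
  then show ?case using insert by simp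
qed (simp_all add: comp_zero_left[OF assms(2)])

lemma psym_Suc_fixed_last:
  assumes "\<sigma> permutes {1..Suc n}" and "\<sigma> (Suc n) = Suc n"
  shows "perm_sym A (Suc n) \<sigma> = tensM (perm_sym A n (perm_remove_last n \<sigma>)) (idm A)"
proof -
  have "tensM (perm_sym A n (perm_remove_last n \<sigma>)) (idm A) \<in> hom (tpow A (Suc n)) (tpow A (Suc n))"
    using tensM_hom[OF psym_hom[OF perm_remove_last_permutes[OF assms(1)]] id_hom] by simp
  then show ?thesis
    unfolding psym_Suc assms(2) by (simp add: sym_unit tensM_id id_right)
qed

lemma sum_perm_sym_last_fixed:
  assumes "k \<le> n"
  shows "(\<Sum>\<sigma> \<in> {\<sigma> \<in> Unsh (Suc n) k. \<sigma> (Suc n) = Suc n}. perm_sym A (Suc n) \<sigma>)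
           = tensM (unsh_sum A n k) (idm A)"
proof -
  have "(\<Sum>\<sigma> \<in> {\<sigma> \<in> Unsh (Suc n) k. \<sigma> (Suc n) = Suc n}. perm_sym A (Suc n) \<sigma>)
      = (\<Sum>\<sigma> \<in> {\<sigma> \<in> Unsh (Suc n) k. \<sigma> (Suc n) = Suc n}.
           tensM (perm_sym A n (perm_remove_last n \<sigma>)) (idm A))"
    by (intro sum.cong refl psym_Suc_fixed_last) (auto simp: Unsh_def)
  also have "\<dots> = (\<Sum>\<tau> \<in> Unsh n k. tensM (perm_sym A n \<tau>) (idm A))"
    by (rule sum.reindex_bij_betw[OF bij_betw_Unsh_perm_remove_last])
       (use assms Unsh_Suc_iff_perm_remove_last_fixed in auto)
  also have "\<dots> = tensM (unsh_sum A n k) (idm A)"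
    unfolding unsh_def by (rule tensM_sum_left[OF psym_hom[OF Unsh_permutes] id_hom, symmetric])
  finally show ?thesis .
qed

lemma sum_perm_sym_last_at_Suc:
  assumes "k \<le> n"
  shows "(\<Sum>\<sigma> \<in> {\<sigma> \<in> Unsh (Suc n) (Suc k). \<sigma> (Suc n) = Suc k}. perm_sym A (Suc n) \<sigma>)
           = comp (tensM (unsh_sum A n k) (idm A)) (tensM (idm (tpow A k)) (sym (tpow A (n - k)) A))"
proof -
  define cycle where "cycle = tensM (idm (tpow A k)) (sym (tpow A (n - k)) A)"
  have cycle_hom: "cycle \<in> hom (tpow A (Suc n)) (tpow A (Suc n))"
    using idm_tensM_sym_hom[of A k "n - k"] assms by (simp add: cycle_def)
  have "(\<Sum>\<sigma> \<in> {\<sigma> \<in> Unsh (Suc n) (Suc k). \<sigma> (Suc n) = Suc k}. perm_sym A (Suc n) \<sigma>)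
      = (\<Sum>\<sigma> \<in> {\<sigma> \<in> Unsh (Suc n) (Suc k). \<sigma> (Suc n) = Suc k}.
           comp (tensM (perm_sym A n (perm_remove_last n \<sigma>)) (idm A)) cycle)"
    unfolding psym_Suc by (rule sum.cong) (auto simp: cycle_def)
  also have "\<dots> = (\<Sum>\<tau> \<in> Unsh n k. comp (tensM (perm_sym A n \<tau>) (idm A)) cycle)"
    by (rule sum.reindex_bij_betw[OF bij_betw_Unsh_perm_remove_last])
       (use assms Unsh_Suc_Suc_iff_perm_remove_last in auto)
  also have "\<dots> = comp (\<Sum>\<tau> \<in> Unsh n k. tensM (perm_sym A n \<tau>) (idm A)) cycle"
    using tensM_hom[OF psym_hom[OF Unsh_permutes] id_hom]
    by (intro comp_sum_left[OF _ cycle_hom, symmetric]) simp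
  also have "\<dots> = comp (tensM (unsh_sum A n k) (idm A)) cycle"
    unfolding unsh_def by (simp only: tensM_sum_left[OF psym_hom[OF Unsh_permutes] id_hom])
  finally show ?thesis unfolding cycle_def .
qed

lemma unsh_Suc_Suc:
  assumes "k < n"
  shows "unsh_sum A (Suc n) (Suc k) =
           tensM (unsh_sum A n (Suc k)) (idm A)
         + comp (tensM (unsh_sum A n k) (idm A)) (tensM (idm (tpow A k)) (sym (tpow A (n - k)) A))"
proof -
  define last_fixed where "last_fixed = {\<sigma> \<in> Unsh (Suc n) (Suc k). \<sigma> (Suc n) = Suc n}"
  define last_at_Suc where "last_at_Suc = {\<sigma> \<in> Unsh (Suc n) (Suc k). \<sigma> (Suc n) = Suc k}"
  have "Unsh (Suc n) (Suc k) = last_fixed \<union> last_at_Suc"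
    using Unsh_last_cases[OF _ less_imp_le[OF assms]] by (auto simp: last_fixed_def last_at_Suc_def)
  moreover have "last_fixed \<inter> last_at_Suc = {}" and "finite last_fixed" and "finite last_at_Suc"
    using assms finite_Unsh by (auto simp: last_fixed_def last_at_Suc_def)
  ultimately have "unsh_sum A (Suc n) (Suc k)
      = (\<Sum>\<sigma>\<in>last_fixed. perm_sym A (Suc n) \<sigma>) + (\<Sum>\<sigma>\<in>last_at_Suc. perm_sym A (Suc n) \<sigma>)"
    unfolding unsh_def by (simp add: sum.union_disjoint)
  then show ?thesis
    using sum_perm_sym_last_fixed[of "Suc k" n A] sum_perm_sym_last_at_Suc[of k n A] assms
    by (simp add: last_fixed_def last_at_Suc_def)
qed

end

theorem proposition3p19:
  fixes hom :: "'o \<Rightarrow> 'o \<Rightarrow> 'm::comm_monoid_add set"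
    and cmp :: "'m \<Rightarrow> 'm \<Rightarrow> 'm"
    and idm :: "'o \<Rightarrow> 'm"
    and tensO :: "'o \<Rightarrow> 'o \<Rightarrow> 'o"
    and tensM :: "'m \<Rightarrow> 'm \<Rightarrow> 'm"
    and unit :: "'o"
    and symm :: "'o \<Rightarrow> 'o \<Rightarrow> 'm"
    and A :: 'o and n k :: nat
  assumes "add_sym_mon_cat hom cmp idm tensO tensM unit symm"
    and "1 \<le> n" and "k \<le> n - 1"
  shows "unsh cmp idm tensO tensM unit symm A (n + 1) (k + 1) =
           tensM (unsh cmp idm tensO tensM unit symm A n (k + 1)) (idm A)
         + cmp (tensM (unsh cmp idm tensO tensM unit symm A n k) (idm A))
                (tensM (idm (opow tensO unit A k)) (symm (opow tensO unit A (n - k)) A))"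
proof -
  interpret add_sym_mon_cat hom cmp idm tensO tensM unit symm by fact
  have "k < n" using assms(2,3) by linarith
  then show ?thesis using unsh_Suc_Suc[of k n A] by simp
qed

end
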